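(* Let $m,k\in\mathbb{N}$ and let $\beta\in\mathbb{C}$ with $\beta\notin\mathbb{Z}_0^-$ and $\frac{\beta}{2}-m\notin\mathbb{Z}_0^-$. Then \[ {}_3F_2\left[\begin{array}{r} -2m-1,\ \beta,\ -m-k-\tfrac{1}{2};\\ -2m-2k-1,\ \tfrac{\beta}{2}-m;\end{array}1\right]_{2m+1}=0. \]
   Context: $\mathbb{N}=\{1,2,3,\dots\}$, $\mathbb{Z}_0^-=\{0,-1,-2,\dots\}$. For $a\in\mathbb{C}$ and $n\in\mathbb{N}_0$, $(a)_0=1$ and $(a)_n=a(a+1)\cdots(a+n-1)$. For $N\in\mathbb{N}_0$, ${}_3F_2\left[\begin{array}{r} a_1,a_2,a_3;\\ b_1,b_2;\end{array}z\right]_N=\sum_{n=0}^{N}\frac{(a_1)_n(a_2)_n(a_3)_n}{(b_1)_n(b_2)_n}\frac{z^n}{n!}$ (the sum of the first $N+1$ terms), defined whenever $(b_1)_n(b_2)_n\neq0$ for $0\le n\le N$. *)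

theory Defs
  imports Complex_Main
begin

definition hyp3F2_trunc ::
  "complex \<Rightarrow> complex \<Rightarrow> complex \<Rightarrow> complex \<Rightarrow> complex \<Rightarrow> complex \<Rightarrow> nat \<Rightarrow> complex" where
  "hyp3F2_trunc a1 a2 a3 b1 b2 z N =
     (\<Sum>n=0..N. pochhammer a1 n * pochhammer a2 n * pochhammer a3 n
                 / (pochhammer b1 n * pochhammer b2 n) * z ^ n / of_nat (fact n))"

end

theory Submission
  imports Defs "HOL-Computational_Algebra.Formal_Power_Series"
begin

text \<open>Put \<open>N = 2m+1\<close>, \<open>g = \<beta>/2 - m\<close>, \<open>c = -m-k-1/2\<close>, so that the sum is
  \<open>T = \<Sum>\<^sub>j p\<^sub>j l\<^sub>j\<close> with \<open>p\<^sub>j\<close> the \<open>j\<close>-th term of the terminating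
  \<open>\<^sub>2F\<^sub>1(-N, \<beta>; g; 1)\<close> and \<open>l\<^sub>j = (c)\<^sub>j / (2c)\<^sub>j\<close>.
  By Chu--Vandermonde, \<open>l\<close> is fixed by the binomial transform
  \<open>l\<^sub>j = \<Sum>\<^sub>n (-1)\<^sup>n C(j,n) l\<^sub>n\<close>. Since \<open>\<beta> = 2g + N - 1\<close>, Chu--Vandermonde also gives
  \<open>\<Sum>\<^sub>j p\<^sub>j C(j,n) = (-1)\<^bsup>N-n\<^esup> p\<^sub>n = -(-1)\<^sup>n p\<^sub>n\<close> as \<open>N\<close> is odd.
  Substituting the first identity into \<open>T\<close> and swapping the sums yields \<open>T = -T\<close>.\<close>

definition hyp2F1_term :: "nat \<Rightarrow> 'a \<Rightarrow> 'a \<Rightarrow> nat \<Rightarrow> 'a::field_char_0" where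
  "hyp2F1_term N b g j = pochhammer (- of_nat N) j * pochhammer b j / (pochhammer g j * fact j)"

lemma pochhammer_minus_of_nat_div_fact:
  "pochhammer (- of_nat N :: 'a::field_char_0) n / fact n = (-1)^n * of_nat (N choose n)"
proof -
  have "of_nat (N choose n) = ((-1::'a)^n * pochhammer (- of_nat N) n / fact n)"
    by (simp add: binomial_gbinomial gbinomial_pochhammer)
  then show ?thesis
    by (simp add: power_mult_distrib[symmetric])
qed

lemma hyp2F1_term_eq_binomial:
  "hyp2F1_term N b g n = (-1)^n * of_nat (N choose n) * (pochhammer b n / pochhammer g n)"
  using pochhammer_minus_of_nat_div_fact[of N n, where 'a='a]
  by (simp add: hyp2F1_term_def field_simps)

lemma sum_hyp2F1_term:
  fixes b g :: "'a::field_char_0"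
  assumes "pochhammer g N \<noteq> 0"
  shows "(\<Sum>j=0..N. hyp2F1_term N b g j) = pochhammer (g - b) N / pochhammer g N"
proof -
  have "\<forall>i\<in>{0..<N}. g \<noteq> - of_nat i"
    using assms by (auto simp: pochhammer_eq_0_iff)
  from Vandermonde_pochhammer[OF this, of b] show ?thesis
    by (simp add: hyp2F1_term_def mult_ac)
qed

lemma sum_alternating_binomial_pochhammer_quotient:
  fixes a b :: "'a::field_char_0"
  assumes "pochhammer b j \<noteq> 0"
  shows "(\<Sum>n=0..j. (-1)^n * of_nat (j choose n) * (pochhammer a n / pochhammer b n))
           = pochhammer (b - a) j / pochhammer b j"
  using sum_hyp2F1_term[OF assms, of a] by (simp add: hyp2F1_term_eq_binomial)

lemma hyp2F1_term_shift:
  fixes b g :: "'a::field_char_0"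
  assumes "n \<le> N" and "pochhammer g (n + i) \<noteq> 0"
  shows "hyp2F1_term N b g (n + i) * of_nat ((n + i) choose n)
           = hyp2F1_term N b g n * hyp2F1_term (N - n) (b + of_nat n) (g + of_nat n) i"
proof -
  have pg: "pochhammer g (n + i) = pochhammer g n * pochhammer (g + of_nat n) i"
    and pb: "pochhammer b (n + i) = pochhammer b n * pochhammer (b + of_nat n) i"
    by (rule pochhammer_product')+
  have pN: "pochhammer (- of_nat N :: 'a) (n + i)
              = pochhammer (- of_nat N) n * pochhammer (- of_nat (N - n)) i"
    using pochhammer_product'[of "- of_nat N :: 'a" n i] assms(1) by (simp add: of_nat_diff)
  have choose: "of_nat ((n + i) choose n) = (fact (n + i) :: 'a) / (fact n * fact i)"
    using binomial_fact[of n "n + i"] by simp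
  have "pochhammer g n \<noteq> 0" "pochhammer (g + of_nat n) i \<noteq> 0"
    using assms(2) pg by auto
  then show ?thesis
    unfolding hyp2F1_term_def pg pb pN choose by (simp add: field_simps)
qed

lemma sum_binomial_hyp2F1_term:
  fixes b g :: "'a::field_char_0"
  assumes n: "n \<le> N" and g: "pochhammer g N \<noteq> 0"
  shows "(\<Sum>j=0..N. hyp2F1_term N b g j * of_nat (j choose n))
           = hyp2F1_term N b g n * (pochhammer (g - b) (N - n) / pochhammer (g + of_nat n) (N - n))"
proof -
  have g_shift: "pochhammer (g + of_nat n) (N - n) \<noteq> 0"
    using g n pochhammer_product'[of g n "N - n"] by simp
  have "(\<Sum>j=0..N. hyp2F1_term N b g j * of_nat (j choose n))
          = (\<Sum>j=n..N. hyp2F1_term N b g j * of_nat (j choose n))"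
    by (rule sum.mono_neutral_right) (auto simp: binomial_eq_0)
  also have "\<dots> = (\<Sum>i=0..N-n. hyp2F1_term N b g (n + i) * of_nat ((n + i) choose n))"
    using sum.shift_bounds_cl_nat_ivl[of "\<lambda>j. hyp2F1_term N b g j * of_nat (j choose n)" 0 n "N - n"] n
    by (simp add: add.commute)
  also have "\<dots> = hyp2F1_term N b g n
                   * (\<Sum>i=0..N-n. hyp2F1_term (N - n) (b + of_nat n) (g + of_nat n) i)"
    unfolding sum_distrib_left
    by (intro sum.cong refl hyp2F1_term_shift n pochhammer_neq_0_mono[OF g]) (use n in auto)
  finally show ?thesis
    using sum_hyp2F1_term[OF g_shift, of "b + of_nat n"] by simp
qed

lemma sum_binomial_hyp2F1_term_eq_sign:
  fixes b g :: "'a::field_char_0"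
  assumes n: "n \<le> N" and g: "pochhammer g N \<noteq> 0" and balanced: "b = 2 * g + of_nat N - 1"
  shows "(\<Sum>j=0..N. hyp2F1_term N b g j * of_nat (j choose n)) = (-1)^(N - n) * hyp2F1_term N b g n"
proof -
  have "g - b = - (g + of_nat N - 1)"
    using balanced by simp
  then have "pochhammer (g - b) (N - n)
               = (-1)^(N - n) * pochhammer ((g + of_nat N - 1) - of_nat (N - n) + 1) (N - n)"
    by (simp only: pochhammer_minus)
  also have "(g + of_nat N - 1) - of_nat (N - n) + 1 = g + of_nat n"
    using n by (simp add: of_nat_diff)
  finally have reflect: "pochhammer (g - b) (N - n) = (-1)^(N - n) * pochhammer (g + of_nat n) (N - n)" .
  have "pochhammer (g + of_nat n) (N - n) \<noteq> 0"
    using g n pochhammer_product'[of g n "N - n"] by simp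
  then show ?thesis
    by (simp add: sum_binomial_hyp2F1_term[OF n g] reflect)
qed

lemma sum_mult_eq_zero_of_binomial_transforms:
  fixes p l :: "nat \<Rightarrow> 'a::field_char_0"
  assumes l: "\<And>j. j \<le> N \<Longrightarrow> (\<Sum>n=0..j. (-1)^n * of_nat (j choose n) * l n) = l j"
    and p: "\<And>n. n \<le> N \<Longrightarrow> (\<Sum>j=0..N. p j * of_nat (j choose n)) = - ((-1)^n * p n)"
  shows "(\<Sum>j=0..N. p j * l j) = 0"
proof -
  have l': "l j = (\<Sum>n=0..N. (-1)^n * of_nat (j choose n) * l n)" if "j \<le> N" for j
  proof -
    have "(\<Sum>n=0..N. (-1)^n * of_nat (j choose n) * l n) = (\<Sum>n=0..j. (-1)^n * of_nat (j choose n) * l n)"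
      by (rule sum.mono_neutral_right) (use that in \<open>auto simp: binomial_eq_0\<close>)
    with l[OF that] show ?thesis by simp
  qed
  define T where "T = (\<Sum>j=0..N. p j * l j)"
  have "T = (\<Sum>j=0..N. \<Sum>n=0..N. ((-1)^n * l n) * (p j * of_nat (j choose n)))"
    unfolding T_def by (intro sum.cong refl) (simp add: l' sum_distrib_left mult_ac)
  also have "\<dots> = (\<Sum>n=0..N. ((-1)^n * l n) * (\<Sum>j=0..N. p j * of_nat (j choose n)))"
    by (subst sum.swap) (simp add: sum_distrib_left)
  also have "\<dots> = - T"
    unfolding T_def sum_negf[symmetric]
    by (intro sum.cong refl) (simp add: p mult_ac power_mult_distrib[symmetric])
  finally show ?thesis
    unfolding T_def[symmetric] by simp
qed

lemma sum_hyp2F1_term_mult_pochhammer_quotient_eq_0: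
  fixes b g c :: "'a::field_char_0"
  assumes "odd N" and g: "pochhammer g N \<noteq> 0" and balanced: "b = 2 * g + of_nat N - 1"
    and c: "pochhammer (2 * c) N \<noteq> 0"
  shows "(\<Sum>j=0..N. hyp2F1_term N b g j * (pochhammer c j / pochhammer (2 * c) j)) = 0"
proof (rule sum_mult_eq_zero_of_binomial_transforms)
  fix j assume "j \<le> N"
  with c have "pochhammer (2 * c) j \<noteq> 0"
    by (rule pochhammer_neq_0_mono)
  from sum_alternating_binomial_pochhammer_quotient[OF this, of c]
  show "(\<Sum>n=0..j. (-1)^n * of_nat (j choose n) * (pochhammer c n / pochhammer (2 * c) n))
          = pochhammer c j / pochhammer (2 * c) j"
    by simp
next
  fix n assume n: "n \<le> N"
  have "(-1)^(N - n) = - ((-1)^n :: 'a)"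
    using n \<open>odd N\<close> by (simp add: minus_one_power_iff even_diff_nat)
  with sum_binomial_hyp2F1_term_eq_sign[OF n g balanced]
  show "(\<Sum>j=0..N. hyp2F1_term N b g j * of_nat (j choose n)) = - ((-1)^n * hyp2F1_term N b g n)"
    by simp
qed

theorem mainTheorem2:
  fixes m k :: nat and \<beta> :: complex
  assumes "m \<ge> 1" and "k \<ge> 1"
    and "\<forall>j::nat. \<beta> \<noteq> - of_nat j"
    and "\<forall>j::nat. \<beta> / 2 - of_nat m \<noteq> - of_nat j"
  shows "hyp3F2_trunc (- of_nat (2*m+1)) \<beta> (- of_nat m - of_nat k - 1/2)
           (- of_nat (2*m+2*k+1)) (\<beta> / 2 - of_nat m) 1 (2*m+1) = 0"
proof -
  define N where "N = 2*m+1"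
  define g where "g = \<beta> / 2 - of_nat m"
  define c :: complex where "c = - of_nat m - of_nat k - 1/2"
  have c2: "2 * c = - of_nat (2*m+2*k+1)"
    by (simp add: c_def field_simps)
  have "(\<Sum>j=0..N. hyp2F1_term N \<beta> g j * (pochhammer c j / pochhammer (2 * c) j)) = 0"
  proof (rule sum_hyp2F1_term_mult_pochhammer_quotient_eq_0)
    show "pochhammer g N \<noteq> 0"
      using assms(4) by (auto simp: g_def pochhammer_eq_0_iff)
    show "pochhammer (2 * c) N \<noteq> 0"
      unfolding c2 by (intro pochhammer_of_nat_eq_0_lemma') (simp add: N_def)
  qed (simp_all add: N_def g_def)
  moreover have "hyp3F2_trunc (- of_nat (2*m+1)) \<beta> (- of_nat m - of_nat k - 1/2)
           (- of_nat (2*m+2*k+1)) (\<beta> / 2 - of_nat m) 1 (2*m+1)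
      = (\<Sum>j=0..N. hyp2F1_term N \<beta> g j * (pochhammer c j / pochhammer (2 * c) j))"
    unfolding hyp3F2_trunc_def hyp2F1_term_def N_def[symmetric] g_def[symmetric] c_def[symmetric]
      c2[symmetric]
    by (intro sum.cong refl) (simp add: mult_ac)
  ultimately show ?thesis
    by simp
qed

end
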